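(* Let $q\ge2$ and $\mu,R>0$. There is no sequence of ID codes for $\Pi^q_{n_i}$, $i=1,2,\dots$, with $n_i\to\infty$, with $M_i\ge 2^{Rn_i^{q-1}}$ messages, and with type-I and type-II error probabilities satisfying $\lambda_{1,i}<n_i^{-\mu}$ and $\lambda_{2,i}<n_i^{-\mu}$ for all $i$.
   Context: Fix an integer $q\ge 2$ and let $\mathcal A_q=\{1,\dots,q\}$. For $n\ge 1$, $S_n$ is the symmetric group on $\{1,\dots,n\}$, and for $\mathbf x\in\mathcal A_q^n$, $\sigma\in S_n$, we write $\sigma\mathbf x=(x_{\sigma^{-1}(1)},\dots,x_{\sigma^{-1}(n)})$. The $n$-block $q$-ary uniform permutation channel $\Pi^q_n$ has input and output alphabet $\mathcal A_q^n$ and transition probabilities $\Pi^q_n(\mathbf y\mid\mathbf x)=\frac{1}{n!}\sum_{\sigma\in S_n}\mathbf 1\{\mathbf y=\sigma\mathbf x\}$; $\Pi^q$ denotes the family $(\Pi^q_n)_{n\ge1}$. An ID code (with deterministic decoders) with $M$ messages for $\Pi^q_n$ (an "$(n,M,\lambda_1,\lambda_2)$ ID code") is a family $\{(Q_i,\mathcal D_i)\}_{i=1}^M$ where each $Q_i$ is a probability distribution on $\mathcal A_q^n$ (the stochastic encoder of message $i$) and $\mathcal D_i\subseteq\mathcal A_q^n$ (the acceptance region of message $i$). Its error probabilities are $\lambda_{i\to j}=\sum_{\mathbf x}Q_i(\mathbf x)\sum_{\mathbf y\in\mathcal D_j}\Pi^q_n(\mathbf y\mid\mathbf x)$ for $i\ne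 j$ and $\lambda_{i\not\to i}=\sum_{\mathbf x}Q_i(\mathbf x)\sum_{\mathbf y\notin\mathcal D_i}\Pi^q_n(\mathbf y\mid\mathbf x)$; the type-I error probability is $\lambda_1=\max_i\lambda_{i\not\to i}$ and the type-II error probability is $\lambda_2=\max_{i\ne j}\lambda_{i\to j}$. *)

theory Defs
  imports "HOL-Analysis.Analysis" "HOL-Combinatorics.Permutations"
begin

definition words :: "nat \<Rightarrow> nat \<Rightarrow> nat list set" where
  "words q n = {xs. length xs = n \<and> set xs \<subseteq> {1..q}}"

definition perm_act :: "(nat \<Rightarrow> nat) \<Rightarrow> nat list \<Rightarrow> nat list" where
  "perm_act \<sigma> xs = map (\<lambda>j. xs ! inv \<sigma> j) [0..<length xs]"

definition perm_channel :: "nat \<Rightarrow> nat list \<Rightarrow> nat list \<Rightarrow> real" where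
  "perm_channel n y x =
     (\<Sum>\<sigma>\<in>{\<sigma>. \<sigma> permutes {..<n}}. (if y = perm_act \<sigma> x then 1 else 0)) / fact n"

text \<open>ID code with messages 1..M: stochastic encoders Q m (distributions on words q n)
  and acceptance regions D m \<subseteq> words q n.\<close>
definition is_ID_code ::
  "nat \<Rightarrow> nat \<Rightarrow> nat \<Rightarrow> (nat \<Rightarrow> nat list \<Rightarrow> real) \<Rightarrow> (nat \<Rightarrow> nat list set) \<Rightarrow> bool" where
  "is_ID_code q n M Q D \<longleftrightarrow> 1 \<le> n \<and>
     (\<forall>m\<in>{1..M}. (\<forall>x\<in>words q n. 0 \<le> Q m x) \<and> (\<Sum>x\<in>words q n. Q m x) = 1
                 \<and> D m \<subseteq> words q n)"

definition err_cross :: "nat \<Rightarrow> nat \<Rightarrow> (nat \<Rightarrow> nat list \<Rightarrow> real) \<Rightarrow> (nat \<Rightarrow> nat list set)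
    \<Rightarrow> nat \<Rightarrow> nat \<Rightarrow> real" where
  "err_cross q n Q D i j = (\<Sum>x\<in>words q n. Q i x * (\<Sum>y\<in>D j. perm_channel n y x))"

definition err_miss :: "nat \<Rightarrow> nat \<Rightarrow> (nat \<Rightarrow> nat list \<Rightarrow> real) \<Rightarrow> (nat \<Rightarrow> nat list set)
    \<Rightarrow> nat \<Rightarrow> real" where
  "err_miss q n Q D i = (\<Sum>x\<in>words q n. Q i x * (\<Sum>y\<in>words q n - D i. perm_channel n y x))"

text \<open>Type-I error: max over messages. Type-II error: max over ordered pairs i \<noteq> j
  (taken to be 0 when M = 1, i.e. the max of the empty set is read as 0).\<close>
definition type1_err :: "nat \<Rightarrow> nat \<Rightarrow> nat \<Rightarrow> (nat \<Rightarrow> nat list \<Rightarrow> real) \<Rightarrow> (nat \<Rightarrow> nat list set) \<Rightarrow> real" where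
  "type1_err q n M Q D = Max ((\<lambda>i. err_miss q n Q D i) ` {1..M})"

definition type2_err :: "nat \<Rightarrow> nat \<Rightarrow> nat \<Rightarrow> (nat \<Rightarrow> nat list \<Rightarrow> real) \<Rightarrow> (nat \<Rightarrow> nat list set) \<Rightarrow> real" where
  "type2_err q n M Q D =
     Max (insert 0 ((\<lambda>(i,j). err_cross q n Q D i j) ` {(i,j). i \<in> {1..M} \<and> j \<in> {1..M} \<and> i \<noteq> j}))"

end

(*
  The acceptance probability of a word x under the uniform permutation channel depends only on
  the type of x (its sorted version), and there are at most (n+1)^(q-1) types.  Call x a core word
  of message j if D j accepts it with probability at least 1/2.  Errors below \<epsilon> force the encoder
  of message i to put mass > 1 - 2\<epsilon> on its own core and < 2\<epsilon> on every other core, so a greedy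
  choice yields about k = ln M / ln (1/\<epsilon>) types lying in the core of i but not all in any other
  core.  These sets of types determine the messages, hence M \<le> \<Sum>s\<le>k. (N choose s) \<le> (e(N+k)/k)^k
  for N = (n+1)^(q-1).  With \<epsilon> = n^-\<mu> this forces ln M = O(ln ln n), which contradicts
  ln M \<ge> R ln 2 n^(q-1).
*)
theory Submission
  imports Defs "HOL-Real_Asymp.Real_Asymp"
begin

section \<open>Acceptance probabilities of the permutation channel\<close>

definition accept_prob :: "nat list set \<Rightarrow> nat list \<Rightarrow> real" where
  "accept_prob D x =
     (\<Sum>p | p permutes {..<length x}. if permute_list p x \<in> D then 1 else 0) / fact (length x)"

lemma perm_act_eq_permute_list: "perm_act \<sigma> xs = permute_list (inv \<sigma>) xs"
  by (simp add: perm_act_def permute_list_def)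

lemma sum_perm_channel:
  assumes "finite D" "length x = n"
  shows "(\<Sum>y\<in>D. perm_channel n y x) = accept_prob D x"
proof -
  have "(\<Sum>y\<in>D. perm_channel n y x)
      = (\<Sum>\<sigma> | \<sigma> permutes {..<n}. \<Sum>y\<in>D. if y = perm_act \<sigma> x then 1 else 0) / fact n"
    unfolding perm_channel_def by (simp add: sum_divide_distrib[symmetric] sum.swap[of _ D])
  also have "\<dots> = (\<Sum>\<sigma> | \<sigma> permutes {..<n}. if permute_list (inv \<sigma>) x \<in> D then 1 else 0) / fact n"
    using assms(1) by (simp add: perm_act_eq_permute_list)
  also have "\<dots> = accept_prob D x"
    unfolding accept_prob_def assms(2) by (subst sum_permutations_inverse) simp
  finally show ?thesis .
qed

lemma accept_prob_sort: "accept_prob D (sort x) = accept_prob D x"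
proof -
  obtain r where r: "r permutes {..<length x}" "permute_list r x = sort x"
    using mset_eq_permutation[of "sort x" x] by auto
  show ?thesis
    unfolding accept_prob_def length_sort
    by (subst setum_permutations_compose_left[OF r(1)]) (simp add: permute_list_compose r(1) flip: r(2))
qed

lemma accept_prob_nonneg: "0 \<le> accept_prob D x"
  unfolding accept_prob_def by (intro divide_nonneg_pos sum_nonneg) auto

lemma accept_prob_le_one: "accept_prob D x \<le> 1"
proof -
  have "(\<Sum>p | p permutes {..<length x}. if permute_list p x \<in> D then 1 else 0)
      \<le> (\<Sum>p | p permutes {..<length x}. 1::real)"
    by (rule sum_mono) auto
  then show ?thesis
    by (simp add: accept_prob_def card_permutations)
qed

lemma permute_list_words: "x \<in> words q n \<Longrightarrow> p permutes {..<n} \<Longrightarrow> permute_list p x \<in> words q n"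
  by (auto simp: words_def)

lemma accept_prob_complement:
  assumes "x \<in> words q n" "D \<subseteq> words q n"
  shows "accept_prob (words q n - D) x = 1 - accept_prob D x"
proof -
  have n: "length x = n" using assms(1) by (simp add: words_def)
  have "accept_prob (words q n - D) x
      = (\<Sum>p | p permutes {..<n}. 1 - (if permute_list p x \<in> D then 1 else 0)) / fact n"
    unfolding accept_prob_def n using permute_list_words[OF assms(1)]
    by (intro arg_cong2[where f = "(/)"] sum.cong) auto
  also have "\<dots> = 1 - accept_prob D x"
    by (simp add: accept_prob_def n sum_subtractf card_permutations diff_divide_distrib)
  finally show ?thesis .
qed

lemma finite_words: "finite (words q n)"
proof -
  have "words q n = {xs. set xs \<subseteq> {1..q} \<and> length xs = n}"
    by (auto simp: words_def)
  then show ?thesis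
    using finite_lists_length_eq[of "{1..q}" n] by simp
qed

lemma mset_eq_if_count_eq_except:
  assumes "size X = size Y" "\<forall>a\<in>B. count X a = count Y a"
    and "set_mset X \<subseteq> insert b B" "set_mset Y \<subseteq> insert b B"
  shows "X = Y"
proof (rule multiset_eqI)
  fix a
  have off_b: "count X c = count Y c" if "c \<noteq> b" for c
    using assms(2-4) that by (metis count_eq_zero_iff insertE subsetD)
  have "{#c \<in># X. c \<noteq> b#} = {#c \<in># Y. c \<noteq> b#}"
    by (intro multiset_eqI) (simp add: off_b)
  moreover have "size Z = size {#c \<in># Z. c \<noteq> b#} + count Z b" for Z
    using arg_cong[OF multiset_partition[of Z "\<lambda>c. c \<noteq> b"], of size]
    by (simp add: filter_eq_replicate_mset)
  ultimately have "count X b = count Y b"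
    using assms(1) by (metis add_left_cancel)
  with off_b show "count X a = count Y a"
    by (cases "a = b") auto
qed

lemma card_sort_words_le: "card (sort ` words q n) \<le> (n + 1) ^ (q - 1)"
proof -
  define counts where "counts x = restrict (count (mset x)) {1..q - 1}" for x
  have "inj_on counts (sort ` words q n)"
  proof (rule inj_onI)
    fix x y assume xy: "x \<in> sort ` words q n" "y \<in> sort ` words q n" and "counts x = counts y"
    then have "\<forall>a\<in>{1..q - 1}. count (mset x) a = count (mset y) a"
      unfolding counts_def by (metis restrict_apply')
    with xy have "mset x = mset y"
      by (intro mset_eq_if_count_eq_except[where B = "{1..q - 1}" and b = q]) (auto simp: words_def)
    with xy show "x = y"
      by (auto simp: properties_for_sort)
  qed
  moreover have "counts ` sort ` words q n \<subseteq> (\<Pi>\<^sub>E a\<in>{1..q - 1}. {0..n})"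
    by (auto simp: counts_def words_def) (metis count_le_size size_mset)
  ultimately have "card (sort ` words q n) \<le> card (\<Pi>\<^sub>E a\<in>{1..q - 1}. {0..n})"
    by (metis card_image card_mono finite_PiE finite_atLeastAtMost)
  then show ?thesis
    by (simp add: card_PiE)
qed

section \<open>Averaging and counting\<close>

lemma sum_superlevel_le:
  fixes Q f :: "'a \<Rightarrow> real"
  assumes "finite W" "\<And>x. x \<in> W \<Longrightarrow> 0 \<le> Q x" "\<And>x. x \<in> W \<Longrightarrow> 0 \<le> f x"
  shows "t * (\<Sum>x | x \<in> W \<and> t \<le> f x. Q x) \<le> (\<Sum>x\<in>W. Q x * f x)"
proof -
  have "t * (\<Sum>x | x \<in> W \<and> t \<le> f x. Q x) \<le> (\<Sum>x | x \<in> W \<and> t \<le> f x. Q x * f x)"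
    unfolding sum_distrib_left using assms(2) by (intro sum_mono) (metis mem_Collect_eq mult.commute mult_left_mono)
  also have "\<dots> \<le> (\<Sum>x\<in>W. Q x * f x)"
    using assms by (intro sum_mono2) auto
  finally show ?thesis .
qed

lemma exists_point_in_few_sets:
  fixes Q :: "'a \<Rightarrow> real"
  assumes X: "finite X" "\<And>x. x \<in> X \<Longrightarrow> 0 \<le> Q x" "0 < (\<Sum>x\<in>X. Q x)" and J: "finite J"
    and light: "\<And>j. j \<in> J \<Longrightarrow> (\<Sum>x\<in>X \<inter> A j. Q x) \<le> \<eta> * (\<Sum>x\<in>X. Q x)"
  obtains x where "x \<in> X" "real (card {j\<in>J. x \<in> A j}) \<le> \<eta> * card J"
proof -
  define cnt where "cnt x = card {j\<in>J. x \<in> A j}" for x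
  have "X \<noteq> {}"
    using X(3) by auto
  then obtain x0 where "x0 \<in> X"
    by blast
  then obtain x where x: "x \<in> X" and min: "\<And>y. y \<in> X \<Longrightarrow> cnt x \<le> cnt y"
    using ex_has_least_nat[of "\<lambda>x. x \<in> X" x0 cnt] by blast
  have "real (cnt x) * (\<Sum>y\<in>X. Q y) \<le> (\<Sum>y\<in>X. Q y * cnt y)"
    unfolding sum_distrib_left using X(2) min by (intro sum_mono) (simp add: mult.commute mult_left_mono)
  also have "\<dots> = (\<Sum>y\<in>X. \<Sum>j\<in>J. if y \<in> A j then Q y else 0)"
    unfolding cnt_def using J by (simp add: sum.If_cases Int_def conj_commute mult.commute)
  also have "\<dots> = (\<Sum>j\<in>J. \<Sum>y\<in>X \<inter> A j. Q y)"
    using X(1) by (subst sum.swap) (simp add: sum.inter_restrict)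
  also have "\<dots> \<le> (\<Sum>j\<in>J. \<eta> * (\<Sum>y\<in>X. Q y))"
    using light by (rule sum_mono)
  finally have "real (cnt x) * (\<Sum>y\<in>X. Q y) \<le> (\<eta> * card J) * (\<Sum>y\<in>X. Q y)"
    by (simp add: mult_ac)
  with X(3) have "real (cnt x) \<le> \<eta> * card J"
    by simp
  with x that show ?thesis
    unfolding cnt_def by blast
qed

lemma exists_small_subset_rarely_covered:
  fixes Q :: "'a \<Rightarrow> real"
  assumes X: "finite X" "\<And>x. x \<in> X \<Longrightarrow> 0 \<le> Q x" "0 < (\<Sum>x\<in>X. Q x)" and J: "finite J"
    and light: "\<And>j. j \<in> J \<Longrightarrow> (\<Sum>x\<in>X \<inter> A j. Q x) \<le> \<eta> * (\<Sum>x\<in>X. Q x)" and "0 \<le> \<eta>"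
  shows "\<exists>S\<subseteq>X. card S \<le> k \<and> real (card {j\<in>J. S \<subseteq> A j}) \<le> \<eta> ^ k * card J"
proof (induction k)
  case 0
  show ?case by auto
next
  case (Suc k)
  then obtain S where S: "S \<subseteq> X" "card S \<le> k" "real (card {j\<in>J. S \<subseteq> A j}) \<le> \<eta> ^ k * card J"
    by blast
  obtain x where x: "x \<in> X"
    and few: "real (card {j\<in>{j\<in>J. S \<subseteq> A j}. x \<in> A j}) \<le> \<eta> * card {j\<in>J. S \<subseteq> A j}"
    using exists_point_in_few_sets[OF X, of "{j\<in>J. S \<subseteq> A j}" A \<eta>] J light by auto
  have "{j\<in>{j\<in>J. S \<subseteq> A j}. x \<in> A j} = {j\<in>J. insert x S \<subseteq> A j}"
    by auto
  moreover have "\<eta> * card {j\<in>J. S \<subseteq> A j} \<le> \<eta> ^ Suc k * card J"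
    using mult_left_mono[OF S(3) \<open>0 \<le> \<eta>\<close>] by (simp add: mult.assoc)
  moreover have "card (insert x S) \<le> Suc k"
    using S(2) finite_subset[OF S(1) X(1)] by (simp add: card_insert_if)
  ultimately show ?case
    using few S(1) x by (intro exI[of _ "insert x S"]) auto
qed

lemma card_subsets_card_le:
  assumes "finite C"
  shows "card {S. S \<subseteq> C \<and> card S \<le> k} = (\<Sum>s\<le>k. card C choose s)"
proof -
  have "{S. S \<subseteq> C \<and> card S \<le> k} = (\<Union>s\<le>k. {S. S \<subseteq> C \<and> card S = s})"
    by auto
  also have "card \<dots> = (\<Sum>s\<le>k. card {S. S \<subseteq> C \<and> card S = s})"
    using assms by (intro card_UN_disjoint) auto
  finally show ?thesis
    using assms by (simp add: n_subsets)
qed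

lemma sum_binomial_le:
  assumes "1 \<le> k" "c \<le> N"
  shows "real (\<Sum>s\<le>k. c choose s) \<le> exp k * ((N + k) / k) ^ k"
proof -
  \<comment> \<open>Rankin's trick: t^k \<le> t^s for s \<le> k, and all weighted terms together give (1 + t)^c.\<close>
  define t where "t = real k / (N + k)"
  have t: "0 < t" "t \<le> 1"
    using assms by (auto simp: t_def)
  have scale: "((N + k) / k) ^ k * t ^ k = 1"
    using assms by (simp add: t_def flip: power_mult_distrib)
  have "t ^ k * (\<Sum>s\<le>k. c choose s) \<le> (\<Sum>s\<le>k. (c choose s) * t ^ s)"
    unfolding sum_distrib_left of_nat_sum
    using t by (intro sum_mono) (auto simp: mult.commute intro!: mult_right_mono power_decreasing)
  also have "\<dots> \<le> (\<Sum>s\<le>c. (c choose s) * t ^ s)"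
  proof -
    have "(\<Sum>s\<le>k. (c choose s) * t ^ s) \<le> (\<Sum>s\<le>k + c. (c choose s) * t ^ s)"
      using t by (intro sum_mono2) auto
    also have "\<dots> = (\<Sum>s\<le>c. (c choose s) * t ^ s)"
      by (rule sum.mono_neutral_right) auto
    finally show ?thesis .
  qed
  also have "\<dots> = (t + 1) ^ c"
    by (simp add: binomial_ring)
  also have "\<dots> \<le> exp t ^ c"
    using t power_mono[of "t + 1" "exp t" c] by (simp add: add.commute)
  also have "\<dots> = exp (t * c)"
    by (simp add: exp_of_nat_mult[symmetric] mult.commute)
  also have "\<dots> \<le> exp k"
  proof -
    have "t * c \<le> t * N"
      using t assms(2) by (intro mult_left_mono) auto
    also have "\<dots> \<le> k"
      using assms by (simp add: t_def field_simps)
    finally show ?thesis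
      by simp
  qed
  finally have bound: "t ^ k * (\<Sum>s\<le>k. c choose s) \<le> exp k" .
  have "real (\<Sum>s\<le>k. c choose s) = ((N + k) / k) ^ k * (t ^ k * (\<Sum>s\<le>k. c choose s))"
    using scale by (metis mult.assoc mult_1)
  also have "\<dots> \<le> ((N + k) / k) ^ k * exp k"
    using assms bound by (intro mult_left_mono) auto
  finally show ?thesis
    by (simp only: mult.commute)
qed

lemma card_le_sum_binomial_if_separating:
  assumes "finite C"
    and T: "\<And>i. i \<in> I \<Longrightarrow> T i \<subseteq> C \<and> card (T i) \<le> k \<and> T i \<subseteq> A i"
    and sep: "\<And>i j. i \<in> I \<Longrightarrow> j \<in> I \<Longrightarrow> j \<noteq> i \<Longrightarrow> \<not> T i \<subseteq> A j"
  shows "card I \<le> (\<Sum>s\<le>k. card C choose s)"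
proof -
  have "inj_on T I"
    using T sep by (metis inj_onI)
  then have "card I = card (T ` I)"
    by (simp add: card_image)
  also have "\<dots> \<le> card {S. S \<subseteq> C \<and> card S \<le> k}"
    using T assms(1) by (intro card_mono) auto
  finally show ?thesis
    using card_subsets_card_le[OF assms(1)] by simp
qed

section \<open>Size of an identification code\<close>

lemma is_ID_codeD:
  assumes "is_ID_code q n M Q D" "i \<in> {1..M}"
  shows "\<And>x. x \<in> words q n \<Longrightarrow> 0 \<le> Q i x" "(\<Sum>x\<in>words q n. Q i x) = 1" "D i \<subseteq> words q n"
  using assms unfolding is_ID_code_def by blast+

lemma err_cross_eq:
  assumes "is_ID_code q n M Q D" "j \<in> {1..M}"
  shows "err_cross q n Q D i j = (\<Sum>x\<in>words q n. Q i x * accept_prob (D j) x)"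
proof -
  have "finite (D j)"
    using is_ID_codeD(3)[OF assms] finite_words finite_subset by blast
  then show ?thesis
    unfolding err_cross_def by (intro sum.cong) (auto simp: sum_perm_channel words_def)
qed

lemma err_miss_eq:
  assumes "is_ID_code q n M Q D" "i \<in> {1..M}"
  shows "err_miss q n Q D i = (\<Sum>x\<in>words q n. Q i x * (1 - accept_prob (D i) x))"
proof -
  have "(\<Sum>y\<in>words q n - D i. perm_channel n y x) = 1 - accept_prob (D i) x"
    if "x \<in> words q n" for x
  proof -
    have "length x = n"
      using that by (simp add: words_def)
    with that show ?thesis
      using sum_perm_channel[of "words q n - D i" x n]
        accept_prob_complement[OF that is_ID_codeD(3)[OF assms]]
      by (simp add: finite_words)
  qed
  then show ?thesis
    by (simp add: err_miss_def)
qed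

lemma err_miss_le_type1_err: "i \<in> {1..M} \<Longrightarrow> err_miss q n Q D i \<le> type1_err q n M Q D"
  unfolding type1_err_def by (intro Max_ge) auto

lemma err_cross_le_type2_err:
  assumes "i \<in> {1..M}" "j \<in> {1..M}" "i \<noteq> j"
  shows "err_cross q n Q D i j \<le> type2_err q n M Q D"
proof -
  have "finite {(i, j). i \<in> {1..M} \<and> j \<in> {1..M} \<and> i \<noteq> j}"
    by (rule finite_subset[of _ "{1..M} \<times> {1..M}"]) auto
  with assms show ?thesis
    unfolding type2_err_def by (intro Max_ge) (auto intro!: imageI)
qed

definition accept_core :: "nat \<Rightarrow> nat \<Rightarrow> (nat \<Rightarrow> nat list set) \<Rightarrow> nat \<Rightarrow> nat list set" where
  "accept_core q n D j = {x \<in> words q n. 1/2 \<le> accept_prob (D j) x}"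

lemma sort_in_accept_core_iff: "sort x \<in> accept_core q n D j \<longleftrightarrow> x \<in> accept_core q n D j"
  by (simp add: accept_core_def words_def accept_prob_sort)

lemma accept_core_mass_other:
  assumes code: "is_ID_code q n M Q D" and err: "type2_err q n M Q D < \<epsilon>"
    and ij: "i \<in> {1..M}" "j \<in> {1..M}" "i \<noteq> j"
  shows "(\<Sum>x\<in>accept_core q n D j. Q i x) < 2 * \<epsilon>"
proof -
  have "1/2 * (\<Sum>x\<in>accept_core q n D j. Q i x) \<le> err_cross q n Q D i j"
    unfolding accept_core_def err_cross_eq[OF code ij(2)]
    by (rule sum_superlevel_le) (auto simp: finite_words accept_prob_nonneg is_ID_codeD[OF code ij(1)])
  with err_cross_le_type2_err[OF ij, of q n Q D] err show ?thesis
    by linarith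
qed

lemma accept_core_mass_own:
  assumes code: "is_ID_code q n M Q D" and err: "type1_err q n M Q D < \<epsilon>" and i: "i \<in> {1..M}"
  shows "1 - 2 * \<epsilon> < (\<Sum>x\<in>accept_core q n D i. Q i x)"
proof -
  let ?W = "words q n" and ?C = "accept_core q n D i"
  have nonneg: "\<And>x. x \<in> ?W \<Longrightarrow> 0 \<le> Q i x"
    using is_ID_codeD(1)[OF code i] .
  have "(\<Sum>x\<in>?W - ?C. Q i x) \<le> (\<Sum>x | x \<in> ?W \<and> 1/2 \<le> 1 - accept_prob (D i) x. Q i x)"
    using nonneg by (intro sum_mono2) (auto simp: finite_words accept_core_def)
  also have "1/2 * \<dots> \<le> err_miss q n Q D i"
    unfolding err_miss_eq[OF code i]
    by (rule sum_superlevel_le) (auto simp: finite_words nonneg accept_prob_le_one)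
  finally have "(\<Sum>x\<in>?W - ?C. Q i x) < 2 * \<epsilon>"
    using err_miss_le_type1_err[OF i, of q n Q D] err by linarith
  moreover have "(\<Sum>x\<in>?W. Q i x) = (\<Sum>x\<in>?C. Q i x) + (\<Sum>x\<in>?W - ?C. Q i x)"
    using sum.subset_diff[of ?C ?W "Q i"] by (auto simp: accept_core_def finite_words)
  ultimately show ?thesis
    using is_ID_codeD(2)[OF code i] by linarith
qed

lemma accept_core_overlap_le:
  assumes code: "is_ID_code q n M Q D"
    and err: "type1_err q n M Q D < \<epsilon>" "type2_err q n M Q D < \<epsilon>" and \<epsilon>: "0 < \<epsilon>" "\<epsilon> < 1/2"
    and ij: "i \<in> {1..M}" "j \<in> {1..M}" "i \<noteq> j"
  shows "(\<Sum>x\<in>accept_core q n D i \<inter> accept_core q n D j. Q i x)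
           \<le> 2 * \<epsilon> / (1 - 2 * \<epsilon>) * (\<Sum>x\<in>accept_core q n D i. Q i x)"
proof -
  let ?C = "accept_core q n D"
  have "(\<Sum>x\<in>?C i \<inter> ?C j. Q i x) \<le> (\<Sum>x\<in>?C j. Q i x)"
    using is_ID_codeD(1)[OF code ij(1)] finite_words[of q n]
    by (intro sum_mono2) (auto simp: accept_core_def)
  also have "\<dots> < 2 * \<epsilon>"
    using accept_core_mass_other[OF code err(2) ij] .
  also have "\<dots> = 2 * \<epsilon> / (1 - 2 * \<epsilon>) * (1 - 2 * \<epsilon>)"
    using \<epsilon> by simp
  also have "\<dots> \<le> 2 * \<epsilon> / (1 - 2 * \<epsilon>) * (\<Sum>x\<in>?C i. Q i x)"
    using accept_core_mass_own[OF code err(1) ij(1)] \<epsilon> by (intro mult_left_mono) auto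
  finally show ?thesis
    by simp
qed

lemma exists_separating_subset:
  assumes code: "is_ID_code q n M Q D"
    and err: "type1_err q n M Q D < \<epsilon>" "type2_err q n M Q D < \<epsilon>" and \<epsilon>: "0 < \<epsilon>" "\<epsilon> < 1/2"
    and small: "(2 * \<epsilon> / (1 - 2 * \<epsilon>)) ^ k * M < 1" and i: "i \<in> {1..M}"
  shows "\<exists>S\<subseteq>accept_core q n D i. card S \<le> k \<and>
           (\<forall>j\<in>{1..M}. j \<noteq> i \<longrightarrow> \<not> S \<subseteq> accept_core q n D j)"
proof -
  define \<eta> where "\<eta> = 2 * \<epsilon> / (1 - 2 * \<epsilon>)"
  let ?C = "accept_core q n D" and ?J = "{1..M} - {i}"
  have "0 \<le> \<eta>" "0 < (\<Sum>x\<in>?C i. Q i x)"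
    using accept_core_mass_own[OF code err(1) i] \<epsilon> by (auto simp: \<eta>_def)
  moreover have "finite (?C i)" "\<And>x. x \<in> ?C i \<Longrightarrow> 0 \<le> Q i x"
    using finite_words[of q n] is_ID_codeD(1)[OF code i] by (auto simp: accept_core_def)
  moreover have "\<And>j. j \<in> ?J \<Longrightarrow> (\<Sum>x\<in>?C i \<inter> ?C j. Q i x) \<le> \<eta> * (\<Sum>x\<in>?C i. Q i x)"
    unfolding \<eta>_def using accept_core_overlap_le[OF code err \<epsilon> i] by auto
  ultimately obtain S where S: "S \<subseteq> ?C i" "card S \<le> k"
      "real (card {j\<in>?J. S \<subseteq> ?C j}) \<le> \<eta> ^ k * card ?J"
    using exists_small_subset_rarely_covered[of "?C i" "Q i" ?J ?C \<eta> k] by blast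
  have "\<eta> ^ k * card ?J \<le> \<eta> ^ k * M"
    using \<open>0 \<le> \<eta>\<close> card_Diff1_le[of "{1..M}" i] by (intro mult_left_mono) auto
  with S(3) small have "card {j\<in>?J. S \<subseteq> ?C j} = 0"
    unfolding \<eta>_def by linarith
  then have "\<forall>j\<in>?J. \<not> S \<subseteq> ?C j"
    by (auto simp: card_eq_0_iff)
  with S(1,2) show ?thesis
    by auto
qed

lemma ID_code_card_le:
  assumes code: "is_ID_code q n M Q D"
    and err: "type1_err q n M Q D < \<epsilon>" "type2_err q n M Q D < \<epsilon>" and \<epsilon>: "0 < \<epsilon>" "\<epsilon> < 1/2"
    and k: "1 \<le> k" and small: "(2 * \<epsilon> / (1 - 2 * \<epsilon>)) ^ k * M < 1"
  shows "real M \<le> exp k * ((real ((n + 1) ^ (q - 1)) + k) / k) ^ k"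
proof -
  let ?C = "accept_core q n D"
  obtain S where S: "\<And>i. i \<in> {1..M} \<Longrightarrow>
      S i \<subseteq> ?C i \<and> card (S i) \<le> k \<and> (\<forall>j\<in>{1..M}. j \<noteq> i \<longrightarrow> \<not> S i \<subseteq> ?C j)"
    using exists_separating_subset[OF code err \<epsilon> small] by metis
  \<comment> \<open>Cores are unions of type classes, so only sets of sorted words need to be counted.\<close>
  have "\<not> sort ` S i \<subseteq> ?C j" if "i \<in> {1..M}" "j \<in> {1..M}" "j \<noteq> i" for i j
    using S[OF that(1)] that sort_in_accept_core_iff by blast
  moreover have "sort ` S i \<subseteq> sort ` words q n \<and> card (sort ` S i) \<le> k \<and> sort ` S i \<subseteq> ?C i"
    if "i \<in> {1..M}" for i
  proof -
    have Si: "S i \<subseteq> ?C i" "card (S i) \<le> k"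
      using S[OF that] by auto
    moreover have "?C i \<subseteq> words q n"
      by (auto simp: accept_core_def)
    moreover have "card (sort ` S i) \<le> card (S i)"
      using Si(1) \<open>?C i \<subseteq> words q n\<close> by (meson card_image_le finite_subset finite_words)
    ultimately show ?thesis
      using sort_in_accept_core_iff by fastforce
  qed
  ultimately have "M \<le> (\<Sum>s\<le>k. card (sort ` words q n) choose s)"
    using card_le_sum_binomial_if_separating[of "sort ` words q n" "{1..M}" "\<lambda>i. sort ` S i" k ?C]
    by (simp add: finite_words)
  then have "real M \<le> real (\<Sum>s\<le>k. card (sort ` words q n) choose s)"
    by linarith
  also have "\<dots> \<le> exp k * ((real ((n + 1) ^ (q - 1)) + k) / k) ^ k"
    using sum_binomial_le[OF k, of "card (sort ` words q n)" "(n + 1) ^ (q - 1)"]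
      of_nat_mono[OF card_sort_words_le[of q n]] by simp
  finally show ?thesis .
qed

lemma ID_code_log_card_le:
  assumes code: "is_ID_code q n M Q D"
    and err: "type1_err q n M Q D < \<epsilon>" "type2_err q n M Q D < \<epsilon>" and \<epsilon>: "0 < \<epsilon>" "\<epsilon> < 1/4"
    and M: "1 < M"
  defines "c \<equiv> - ln (2 * \<epsilon> / (1 - 2 * \<epsilon>))" and "L \<equiv> ln (real M)"
    and "N \<equiv> real ((n + 1) ^ (q - 1))"
  shows "L \<le> (L / c + 1) * (1 + ln (1 + N * c / L))"
proof -
  have c: "0 < c"
    using \<epsilon> by (simp add: c_def field_simps)
  have L: "0 < L"
    using M by (simp add: L_def)
  \<comment> \<open>Roughly the least k with (2\<epsilon> / (1 - 2\<epsilon>))^k M < 1.\<close>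
  define k where "k = nat \<lfloor>L / c\<rfloor> + 1"
  have "real k = of_int \<lfloor>L / c\<rfloor> + 1"
    using L c by (simp add: k_def)
  then have k: "L / c < k" "k \<le> L / c + 1" "1 \<le> k"
    using floor_correct[of "L / c"] by (linarith, linarith, simp add: k_def)
  have "0 < 2 * \<epsilon> / (1 - 2 * \<epsilon>)"
    using \<epsilon> by simp
  then have "(2 * \<epsilon> / (1 - 2 * \<epsilon>)) ^ k * M = exp (L - k * c)"
    using M by (simp add: c_def L_def exp_add exp_of_nat_mult)
  also have "\<dots> < 1"
    using k(1) c by (simp add: field_simps)
  finally have "real M \<le> exp k * ((N + k) / k) ^ k"
    using ID_code_card_le[OF code err, of k] \<epsilon> k(3) by (simp add: N_def)
  moreover have N: "0 \<le> N"
    by (simp add: N_def)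
  moreover have pos: "0 < (N + k) / k"
    using k(3) N by simp
  ultimately have "L \<le> ln (exp k * ((N + k) / k) ^ k)"
    using M unfolding L_def by (subst ln_le_cancel_iff) auto
  also have "\<dots> = k * (1 + ln (1 + N / k))"
    using k(3) pos by (simp add: ln_mult ln_realpow add_divide_distrib algebra_simps)
  also have "\<dots> \<le> k * (1 + ln (1 + N * c / L))"
  proof -
    have "1 / k \<le> c / L"
      using k(1,3) c L by (simp add: field_simps)
    then have "N / k \<le> N * c / L"
      using mult_left_mono[of "1 / k" "c / L" N] N by simp
    then show ?thesis
      using N by (intro mult_left_mono add_left_mono ln_mono) (auto intro!: add_pos_nonneg)
  qed
  also have "\<dots> \<le> (L / c + 1) * (1 + ln (1 + N * c / L))"
    using k(2) c L N by (intro mult_right_mono) auto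
  finally show ?thesis .
qed

section \<open>Polynomially small errors\<close>

lemma error_exponent_bounds:
  fixes \<epsilon> :: real
  assumes "0 < \<epsilon>" "\<epsilon> < 1/4"
  shows "- ln (4 * \<epsilon>) \<le> - ln (2 * \<epsilon> / (1 - 2 * \<epsilon>))" "- ln (2 * \<epsilon> / (1 - 2 * \<epsilon>)) \<le> - ln \<epsilon>"
proof -
  have "\<epsilon> \<le> 2 * \<epsilon> / (1 - 2 * \<epsilon>)" "2 * \<epsilon> / (1 - 2 * \<epsilon>) \<le> 4 * \<epsilon>"
    using assms by (simp_all add: field_simps)
  with assms show "- ln (4 * \<epsilon>) \<le> - ln (2 * \<epsilon> / (1 - 2 * \<epsilon>))" "- ln (2 * \<epsilon> / (1 - 2 * \<epsilon>)) \<le> - ln \<epsilon>"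
    by simp_all
qed

lemma eventually_ID_code_regime:
  fixes K R \<mu> :: real
  assumes "0 < K" "0 < R" "0 < \<mu>"
  shows "eventually (\<lambda>n::nat. 1 \<le> n \<and> real n powr - \<mu> < 1/4 \<and>
      1 + ln (1 + K * \<mu> * ln n) \<le> (\<mu> * ln n - ln 4) / 2 \<and>
      2 * (1 + ln (1 + K * \<mu> * ln n)) < R * ln 2 * n) at_top"
proof -
  have "eventually (\<lambda>n::nat. real n powr - \<mu> < 1/4) at_top"
    using assms by real_asymp
  moreover have "eventually (\<lambda>n::nat. 1 + ln (1 + K * \<mu> * ln n) \<le> (\<mu> * ln n - ln 4) / 2) at_top"
    using assms by real_asymp
  moreover have "eventually (\<lambda>n::nat. 2 * (1 + ln (1 + K * \<mu> * ln n)) < R * ln 2 * n) at_top"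
    using assms by real_asymp
  ultimately show ?thesis
    by (intro eventually_conj eventually_ge_at_top)
qed

lemma no_large_ID_code_in_regime:
  fixes n q :: nat and R \<mu> :: real
  defines "K \<equiv> 2 ^ (q - 1) / (R * ln 2)"
  assumes q: "2 \<le> q" and R: "0 < R" and \<mu>: "0 < \<mu>" and n: "1 \<le> n"
    and large: "real n powr - \<mu> < 1/4"
      "1 + ln (1 + K * \<mu> * ln n) \<le> (\<mu> * ln n - ln 4) / 2"
      "2 * (1 + ln (1 + K * \<mu> * ln n)) < R * ln 2 * n"
    and code: "is_ID_code q n M Q D" and M: "2 powr (R * real n ^ (q - 1)) \<le> real M"
    and err: "type1_err q n M Q D < real n powr - \<mu>" "type2_err q n M Q D < real n powr - \<mu>"
  shows False
proof -
  define \<epsilon> where "\<epsilon> = real n powr - \<mu>"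
  define c where "c = - ln (2 * \<epsilon> / (1 - 2 * \<epsilon>))"
  define L where "L = ln (real M)"
  define N where "N = real ((n + 1) ^ (q - 1))"
  define G where "G = 1 + ln (1 + K * \<mu> * ln n)"
  have "0 < R * real n ^ (q - 1)"
    using R n by simp
  then have M1: "1 < real M"
    using M gr_one_powr[of 2 "R * real n ^ (q - 1)"] by linarith
  have \<epsilon>: "0 < \<epsilon>" "\<epsilon> < 1/4"
    using n large(1) by (auto simp: \<epsilon>_def)
  have c: "\<mu> * ln n - ln 4 \<le> c" "c \<le> \<mu> * ln n"
    using error_exponent_bounds[OF \<epsilon>] \<epsilon> n by (simp_all add: c_def \<epsilon>_def ln_mult ln_powr)
  have "0 \<le> K * \<mu> * ln n"
    using R \<mu> n by (simp add: K_def)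
  then have G: "1 \<le> G" "G \<le> c / 2"
    using large(2) c(1) by (simp_all add: G_def)
  have "n \<le> n ^ (q - 1)"
    using q n by (simp add: self_le_power)
  then have "R * ln 2 * n \<le> R * ln 2 * real n ^ (q - 1)"
    using R by (simp flip: of_nat_power)
  also have "R * ln 2 * real n ^ (q - 1) \<le> L"
  proof -
    have "ln (2 powr (R * real n ^ (q - 1))) \<le> L"
      using M M1 unfolding L_def by (subst ln_le_cancel_iff) auto
    then show ?thesis
      by (simp add: ln_powr mult_ac)
  qed
  finally have L: "R * ln 2 * n \<le> L" .
  \<comment> \<open>K is chosen precisely to make N \<le> K L.\<close>
  have "N \<le> 2 ^ (q - 1) * real n ^ (q - 1)"
    using n power_mono[of "1 + real n" "2 * real n" "q - 1"] by (simp add: N_def power_mult_distrib)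
  also have "\<dots> \<le> K * L"
    using R \<open>R * ln 2 * real n ^ (q - 1) \<le> L\<close> by (simp add: K_def field_simps)
  finally have "N \<le> K * L" .
  have "0 < R * ln 2 * n"
    using R n by simp
  with L G have Lpos: "0 < L" and cpos: "0 < c"
    by linarith+
  have "N * c / L \<le> K * c"
    using mult_right_mono[OF \<open>N \<le> K * L\<close>, of c] Lpos cpos by (simp add: pos_divide_le_eq mult_ac)
  also have "\<dots> \<le> K * \<mu> * ln n"
    using mult_left_mono[OF c(2), of K] R by (simp add: K_def mult.assoc)
  finally have "N * c / L \<le> K * \<mu> * ln n" .
  moreover have "0 \<le> N * c / L"
    using Lpos cpos by (simp add: N_def)
  ultimately have "1 + ln (1 + N * c / L) \<le> G"
    using ln_mono[of "1 + N * c / L" "1 + K * \<mu> * ln n"] by (simp add: G_def)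
  have "L \<le> (L / c + 1) * (1 + ln (1 + N * c / L))"
    using M1 ID_code_log_card_le[OF code err[folded \<epsilon>_def] \<epsilon>] by (simp add: c_def L_def N_def)
  also have "\<dots> \<le> (L / c + 1) * G"
    using \<open>1 + ln (1 + N * c / L) \<le> G\<close> Lpos cpos by (intro mult_left_mono) auto
  also have "\<dots> = L * (G / c) + G"
    using cpos by (simp add: field_simps)
  also have "\<dots> \<le> L / 2 + G"
    using G cpos Lpos mult_left_mono[of "G / c" "1 / 2" L] by (simp add: field_simps)
  finally show False
    using L large(3) by (simp add: G_def)
qed

lemma eventually_no_large_ID_code:
  assumes "2 \<le> q" "0 < R" "0 < \<mu>"
  shows "eventually (\<lambda>n. \<forall>M Q D. is_ID_code q n M Q D \<longrightarrow> 2 powr (R * real n ^ (q - 1)) \<le> real M \<longrightarrow>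
           type1_err q n M Q D < real n powr - \<mu> \<longrightarrow> \<not> type2_err q n M Q D < real n powr - \<mu>) at_top"
proof -
  define K where "K = 2 ^ (q - 1) / (R * ln 2)"
  have "0 < K"
    using assms by (simp add: K_def)
  then have "eventually (\<lambda>n::nat. 1 \<le> n \<and> real n powr - \<mu> < 1/4 \<and>
      1 + ln (1 + K * \<mu> * ln n) \<le> (\<mu> * ln n - ln 4) / 2 \<and>
      2 * (1 + ln (1 + K * \<mu> * ln n)) < R * ln 2 * n) at_top"
    using eventually_ID_code_regime assms(2,3) by blast
  then show ?thesis
  proof (rule eventually_mono)
    fix n :: nat
    assume large: "1 \<le> n \<and> real n powr - \<mu> < 1/4 \<and>
      1 + ln (1 + K * \<mu> * ln n) \<le> (\<mu> * ln n - ln 4) / 2 \<and>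
      2 * (1 + ln (1 + K * \<mu> * ln n)) < R * ln 2 * n"
    show "\<forall>M Q D. is_ID_code q n M Q D \<longrightarrow> 2 powr (R * real n ^ (q - 1)) \<le> real M \<longrightarrow>
      type1_err q n M Q D < real n powr - \<mu> \<longrightarrow> \<not> type2_err q n M Q D < real n powr - \<mu>"
    proof (intro allI impI notI)
      fix M Q D
      assume code: "is_ID_code q n M Q D" and M: "2 powr (R * real n ^ (q - 1)) \<le> real M"
        and err: "type1_err q n M Q D < real n powr - \<mu>" "type2_err q n M Q D < real n powr - \<mu>"
      from large show False
        unfolding K_def by (elim conjE) (rule no_large_ID_code_in_regime[OF assms _ _ _ _ code M err]; assumption)
    qed
  qed
qed

theorem theorem1:
  fixes q :: nat and \<mu> R :: real
  assumes "q \<ge> 2" and "\<mu> > 0" and "R > 0"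
  shows "\<not> (\<exists>(n :: nat \<Rightarrow> nat) (M :: nat \<Rightarrow> nat) Q D.
            filterlim n at_top sequentially \<and>
            (\<forall>i. is_ID_code q (n i) (M i) (Q i) (D i) \<and>
                 real (M i) \<ge> 2 powr (R * real (n i) ^ (q - 1)) \<and>
                 type1_err q (n i) (M i) (Q i) (D i) < real (n i) powr (- \<mu>) \<and>
                 type2_err q (n i) (M i) (Q i) (D i) < real (n i) powr (- \<mu>)))"
proof
  assume "\<exists>(n :: nat \<Rightarrow> nat) (M :: nat \<Rightarrow> nat) Q D.
            filterlim n at_top sequentially \<and>
            (\<forall>i. is_ID_code q (n i) (M i) (Q i) (D i) \<and>
                 real (M i) \<ge> 2 powr (R * real (n i) ^ (q - 1)) \<and>
                 type1_err q (n i) (M i) (Q i) (D i) < real (n i) powr (- \<mu>) \<and>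
                 type2_err q (n i) (M i) (Q i) (D i) < real (n i) powr (- \<mu>))"
  then obtain n :: "nat \<Rightarrow> nat" and M Q D where lim: "filterlim n at_top sequentially"
    and codes: "\<And>i. is_ID_code q (n i) (M i) (Q i) (D i) \<and>
                 real (M i) \<ge> 2 powr (R * real (n i) ^ (q - 1)) \<and>
                 type1_err q (n i) (M i) (Q i) (D i) < real (n i) powr (- \<mu>) \<and>
                 type2_err q (n i) (M i) (Q i) (D i) < real (n i) powr (- \<mu>)"
    by blast
  have "eventually (\<lambda>i. False) sequentially"
    using eventually_compose_filterlim[OF eventually_no_large_ID_code[OF assms(1,3,2)] lim]
    by (rule eventually_mono) (use codes in fastforce)
  then show False
    by simp
qed

end
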